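(* Fix $m \ge 1$ and consider the finite partial monitoring game for SumLoss with top-1 feedback and binary relevance, with loss matrix $L$ and feedback matrix $H$ as defined in the context. Then the global observability condition holds: for every pair of learner actions $\sigma_i,\sigma_j$, $$\ell_i-\ell_j \in \bigoplus_{k\in[m!]} \mathrm{Col}(S_k^{\top}).$$
   Context: Objects are $\{1,\dots,m\}$; $[n]=\{1,\dots,n\}$. A learner action is a permutation $\sigma$ of $[m]$, where $\sigma(i)$ is the rank (position) of object $i$ and $\sigma^{-1}(j)$ is the object at position $j$; fix an enumeration $\sigma_1,\dots,\sigma_{m!}$ of all permutations. An adversary action is a relevance vector $r\in\{0,1\}^m$; fix an enumeration $r_1,\dots,r_{2^m}$. SumLoss is $SumLoss(\sigma,r)=\sum_{i=1}^m \sigma(i)r(i)$. The loss matrix $L$ is the $m!\times 2^m$ matrix with $L_{i,j}=SumLoss(\sigma_i,r_j)$, and $\ell_i\in\mathbb{R}^{2^m}$ denotes its $i$-th row. The feedback matrix $H$ is the $m!\times 2^m$ matrix with $H_{i,j}=r_j(\sigma_i^{-1}(1))$ (the relevance of the top-ranked object). The signal matrix of action $\sigma_i$ is $S_i\in\{0,1\}^{2\times 2^m}$ with $(S_i)_{1,\ell}=\mathbb{1}(H_{i,\ell}=0)$ and $(S_i)_{2,\ell}=\mathbb{1}(H_{i,\ell}=1)$. $\mathrm{Col}(\cdot)$ denotes column space and $\bigoplus$ the sum of subspaces of $\mathbb{R}^{2^m}$. *)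

theory Defs
  imports Complex_Main "HOL-Library.FuncSet" "HOL-Combinatorics.Permutations"
begin

text \<open>Learner actions: permutations of [m]; sigma i is the rank of object i.\<close>
definition perms :: "nat \<Rightarrow> (nat \<Rightarrow> nat) set" where
  "perms m = {\<sigma>. \<sigma> permutes {1..m}}"

definition rels :: "nat \<Rightarrow> (nat \<Rightarrow> nat) set" where
  "rels m = ({1..m} \<rightarrow>\<^sub>E {0, 1})"

text \<open>SumLoss(sigma, r) = sum_i sigma(i) r(i); this is the entry L at (sigma, r).\<close>
definition sumloss :: "nat \<Rightarrow> (nat \<Rightarrow> nat) \<Rightarrow> (nat \<Rightarrow> nat) \<Rightarrow> real" where
  "sumloss m \<sigma> r = (\<Sum>i = 1..m. real (\<sigma> i * r i))"

text \<open>Feedback H(sigma, r) = relevance of the top-ranked object sigma^{-1}(1).\<close>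
definition feedback :: "(nat \<Rightarrow> nat) \<Rightarrow> (nat \<Rightarrow> nat) \<Rightarrow> nat" where
  "feedback \<sigma> r = r (inv \<sigma> 1)"

text \<open>Signal matrix of sigma: row h (h = 0 is the first row, h = 1 the second),
  column r, entry 1(H(sigma,r) = h).\<close>
definition signal :: "(nat \<Rightarrow> nat) \<Rightarrow> nat \<Rightarrow> (nat \<Rightarrow> nat) \<Rightarrow> real" where
  "signal \<sigma> h r = (if feedback \<sigma> r = h then 1 else 0)"

end

theory Submission
  imports Defs
begin

text \<open>The loss difference of two rankings is a linear function of the relevance vector,
  r \<mapsto> \<Sum>i (\<sigma>i(i) - \<sigma>j(i)) r(i). Each coordinate r(i) is observed under top-1 feedback:
  the transposition of 1 and i puts object i on top, so its second signal row is exactly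
  r \<mapsto> r(i). Hence every linear function of r, in particular every loss difference,
  lies in the span of the signal rows.\<close>

lemma transpose_top_in_perms:
  assumes "i \<in> {1..m}"
  shows "Transposition.transpose 1 i \<in> perms m"
  using assms unfolding perms_def by (auto intro!: permutes_swap_id)

lemma signal_transpose_top:
  assumes "r \<in> rels m" and "i \<in> {1..m}"
  shows "signal (Transposition.transpose 1 i) 1 r = real (r i)"
proof -
  have "r i \<in> {0, 1}" using assms unfolding rels_def by auto
  moreover have "inv (Transposition.transpose 1 i) 1 = i" by simp
  ultimately show ?thesis unfolding signal_def feedback_def by auto
qed

lemma linear_in_signal_span:
  fixes a :: "nat \<Rightarrow> real"
  shows "\<exists>c :: (nat \<Rightarrow> nat) \<Rightarrow> nat \<Rightarrow> real.
           \<forall>r \<in> rels m. (\<Sum>i = 1..m. a i * real (r i))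
              = (\<Sum>k \<in> perms m. \<Sum>h \<in> {0, 1}. c k h * signal k h r)"
proof (intro exI ballI)
  define \<tau> :: "nat \<Rightarrow> nat \<Rightarrow> nat" where "\<tau> i = Transposition.transpose 1 i" for i
  define c :: "(nat \<Rightarrow> nat) \<Rightarrow> nat \<Rightarrow> real" where
    "c k h = (if h = 1 then (\<Sum>i = 1..m. if \<tau> i = k then a i else 0) else 0)" for k h
  fix r assume r: "r \<in> rels m"
  have fin: "finite (perms m)"
    unfolding perms_def using finite_permutations[of "{1..m}"] by simp
  have "(\<Sum>k \<in> perms m. \<Sum>h \<in> {0, 1}. c k h * signal k h r)
      = (\<Sum>k \<in> perms m. \<Sum>i = 1..m. if \<tau> i = k then a i * signal k 1 r else 0)"
    unfolding c_def by (auto simp: sum_distrib_right intro!: sum.cong)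
  also have "\<dots> = (\<Sum>i = 1..m. \<Sum>k \<in> perms m. if \<tau> i = k then a i * signal k 1 r else 0)"
    by (rule sum.swap)
  also have "\<dots> = (\<Sum>i = 1..m. a i * signal (\<tau> i) 1 r)"
    using fin transpose_top_in_perms by (simp add: \<tau>_def sum.delta')
  also have "\<dots> = (\<Sum>i = 1..m. a i * real (r i))"
    using signal_transpose_top[OF r] by (simp add: \<tau>_def)
  finally show "(\<Sum>i = 1..m. a i * real (r i))
      = (\<Sum>k \<in> perms m. \<Sum>h \<in> {0, 1}. c k h * signal k h r)" ..
qed

lemma sumloss_diff:
  "sumloss m \<sigma> r - sumloss m \<sigma>' r = (\<Sum>i = 1..m. (real (\<sigma> i) - real (\<sigma>' i)) * real (r i))"
  unfolding sumloss_def by (simp add: sum_subtractf left_diff_distrib)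

theorem theorem1:
  fixes m :: nat and \<sigma>i \<sigma>j :: "nat \<Rightarrow> nat"
  assumes "m \<ge> 1" and "\<sigma>i \<in> perms m" and "\<sigma>j \<in> perms m"
  shows "\<exists>c :: (nat \<Rightarrow> nat) \<Rightarrow> nat \<Rightarrow> real.
           \<forall>r \<in> rels m. sumloss m \<sigma>i r - sumloss m \<sigma>j r
              = (\<Sum>k \<in> perms m. \<Sum>h \<in> {0, 1}. c k h * signal k h r)"
  unfolding sumloss_diff by (rule linear_in_signal_span)

end
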